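(* Let $n \ge k \ge 1$ be integers, $s \in (0,1)$, $q = 1-s$, $r = q/s$, and let $S$ and $P=(p_{xy})$ be as in the context. Let $W^b \in S$ be a state with exactly $b$ entries equal to $1^*$, and let $W \in S$ be the state obtained from $W^b$ by replacing every entry $1^*$ by $1$ (same physical configuration, no blockages). Let $(\xi_x)_{x \in S}$ be any density on $S$ and let $\alpha = \sum_{x \in S} \xi_x p_{xW}$ be the total density transitioned into $W$. Then the total density transitioned into $W^b$ is $\sum_{x \in S} \xi_x p_{xW^b} = r^b \alpha$.
   Context: Let $1^*$ be a formal symbol with $|1^*| := 1$ and $|m| := m$ for positive integers $m$. The state space $S$ is the set of $k$-tuples $x=(x_1,\dots,x_k)$ with each $x_i \in \{1^*,1,2,\dots,n-k+1\}$, $\sum_{i=1}^k |x_i| = n$ and at most $k-1$ entries equal to $1^*$ (these describe distances between consecutive workers on a circle of $n$ bins, $1^*$ marking a blocked worker). $b(x)$ is the number of entries of $x$ equal to $1^*$ and $|x| = (|x_1|,\dots,|x_k|)$. For $\Delta=(d_1,\dots,d_k)\in\mathbb{Z}^k$ with $\sum d_i = 0$, let $\gamma_j = \sum_{i=1}^j d_i$ and $\phi(\Delta) = \sum_{j=1}^k(\gamma_j - \min_i \gamma_i)$. The transition probabilities of the warehouse Markov chain are $p_{xy} = r^{\,b(y)} \frac{s^k}{1-q^k} q^{\,\phi(|y|-|x|)}$ for $x,y \in S$. *)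

theory Defs
  imports Complex_Main
begin

text \<open>An entry of a state: either the formal symbol 1* (Star) or a positive integer.\<close>
datatype entry = Star | Num nat

fun absv :: "entry \<Rightarrow> nat" where
  "absv Star = 1"
| "absv (Num m) = m"

definition blocked :: "entry list \<Rightarrow> nat" where
  "blocked x = length (filter (\<lambda>e. e = Star) x)"

text \<open>State space S for n bins and k workers (k-tuples as lists of length k).\<close>
definition states :: "nat \<Rightarrow> nat \<Rightarrow> entry list set" where
  "states n k = {x. length x = k
      \<and> (\<forall>e\<in>set x. e = Star \<or> (\<exists>m. e = Num m \<and> 1 \<le> m \<and> m \<le> n - k + 1))
      \<and> (\<Sum>i<k. absv (x ! i)) = n
      \<and> blocked x \<le> k - 1}"

definition gam :: "int list \<Rightarrow> nat \<Rightarrow> int" where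
  "gam d j = (\<Sum>i<j. d ! i)"

definition phi :: "int list \<Rightarrow> nat" where
  "phi d = nat (\<Sum>j=1..length d. gam d j - Min {gam d i | i. i \<in> {1..length d}})"

definition absdiff :: "entry list \<Rightarrow> entry list \<Rightarrow> int list" where
  "absdiff y x = map (\<lambda>i. int (absv (y ! i)) - int (absv (x ! i))) [0..<length y]"

definition trans_prob :: "real \<Rightarrow> nat \<Rightarrow> entry list \<Rightarrow> entry list \<Rightarrow> real" where
  "trans_prob s k x y =
     (let q = 1 - s; r = q / s in
      r ^ blocked y * (s ^ k / (1 - q ^ k)) * q ^ phi (absdiff y x))"

definition unblock :: "entry list \<Rightarrow> entry list" where
  "unblock x = map (\<lambda>e. if e = Star then Num 1 else e) x"

end

theory Submission
  imports Defs
begin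

(* The transition probability p_xy depends on the target y only through b(y) and |y|;
   unblocking keeps |y| and sets b to 0, so p_xy = r^b(y) p_x(unblock y) term by term. *)

lemma absv_unblock_nth: "i < length y \<Longrightarrow> absv (unblock y ! i) = absv (y ! i)"
  by (auto simp: unblock_def)

lemma absdiff_unblock: "absdiff (unblock y) x = absdiff y x"
  by (simp add: absdiff_def absv_unblock_nth unblock_def)

lemma blocked_unblock: "blocked (unblock y) = 0"
  by (simp add: blocked_def unblock_def filter_empty_conv)

lemma trans_prob_unblock:
  "trans_prob s k x y = ((1 - s) / s) ^ blocked y * trans_prob s k x (unblock y)"
  by (simp add: trans_prob_def Let_def absdiff_unblock blocked_unblock)

lemma inflow_unblock:
  "(\<Sum>x\<in>A. \<xi> x * trans_prob s k x y)
     = ((1 - s) / s) ^ blocked y * (\<Sum>x\<in>A. \<xi> x * trans_prob s k x (unblock y))"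
  by (simp add: sum_distrib_left trans_prob_unblock[of s k _ y] mult.left_commute)

theorem lemma1:
  fixes n k b :: nat and s :: real and Wb :: "entry list" and \<xi> :: "entry list \<Rightarrow> real"
  assumes "1 \<le> k" and "k \<le> n"
    and "0 < s" and "s < 1"
    and "Wb \<in> states n k" and "blocked Wb = b"
    and "\<forall>x\<in>states n k. 0 \<le> \<xi> x" and "(\<Sum>x\<in>states n k. \<xi> x) = 1"
  shows "(\<Sum>x\<in>states n k. \<xi> x * trans_prob s k x Wb)
       = ((1 - s) / s) ^ b * (\<Sum>x\<in>states n k. \<xi> x * trans_prob s k x (unblock Wb))"
  using inflow_unblock[of \<xi> s k Wb "states n k"] by (simp add: \<open>blocked Wb = b\<close>)

end
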